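(* Let $C$ be a nonzero linear code of length $n$ over $R$ with component codes $C_1,\dots,C_8$. Then $C$ is an MDS code over $R$ if and only if each $C_i$ ($1\le i\le 8$) is an MDS code over $\mathbb{Z}_4$ and all the $C_i$ have the same parameters (same cardinality and same minimum Hamming distance).
   Context: $R=\mathbb{Z}_4[u,v,w]/\langle u^2-u,v^2-v,w^2-w\rangle$, with idempotents $\eta_1=(1-u)(1-v)(1-w)$, $\eta_2=u(1-v)(1-w)$, $\eta_3=(1-u)v(1-w)$, $\eta_4=(1-u)(1-v)w$, $\eta_5=uv(1-w)$, $\eta_6=u(1-v)w$, $\eta_7=(1-u)vw$, $\eta_8=uvw$; every $\mathbf{x}\in R^n$ is uniquely $\sum_{i=1}^8\mathbf{x}_i\eta_i$ with $\mathbf{x}_i\in\mathbb{Z}_4^n$. A linear code over $R$ is an $R$-submodule of $R^n$; its component codes are $C_i=\{\mathbf{x}_i:\ \mathbf{x}\in C\}\subseteq\mathbb{Z}_4^n$. $d_H$ denotes minimum Hamming distance. A code $D$ of length $n$ over a finite ring $S$ is MDS if $d_H(D)=n-\log_{|S|}|D|+1$; here $|R|=4^8$. *)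

theory Defs
  imports Complex_Main "HOL-Library.Numeral_Type"
begin

text \<open>The ring R = Z4[u,v,w]/(u^2-u, v^2-v, w^2-w) is represented by the coefficient
  functions of multilinear polynomials: an element is a map from exponent
  triples (a,b,c) in {0,1}^3 (encoded as booleans) to Z4, standing for
  the sum of coeff(a,b,c) u^a v^b w^c.  Because u^2 = u etc., monomials multiply
  by componentwise disjunction of the exponent triples.\<close>

type_synonym Z4 = "4"
type_synonym mono = "bool \<times> bool \<times> bool"
type_synonym R = "mono \<Rightarrow> Z4"

definition mono_mult :: "mono \<Rightarrow> mono \<Rightarrow> mono" where
  "mono_mult m1 m2 = (case m1 of (a,b,c) \<Rightarrow> case m2 of (a',b',c') \<Rightarrow> (a \<or> a', b \<or> b', c \<or> c'))"

definition rzero :: R where "rzero = (\<lambda>m. 0)"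
definition radd :: "R \<Rightarrow> R \<Rightarrow> R" where "radd f g = (\<lambda>m. f m + g m)"
definition rsub :: "R \<Rightarrow> R \<Rightarrow> R" where "rsub f g = (\<lambda>m. f m - g m)"
definition rmul :: "R \<Rightarrow> R \<Rightarrow> R" where
  "rmul f g = (\<lambda>m. \<Sum>p\<in>{p. mono_mult (fst p) (snd p) = m}. f (fst p) * g (snd p))"
definition rconst :: "Z4 \<Rightarrow> R" where
  "rconst c = (\<lambda>m. if m = (False, False, False) then c else 0)"
definition rone :: R where "rone = rconst 1"
definition ru :: R where "ru = (\<lambda>m. if m = (True, False, False) then 1 else 0)"
definition rv :: R where "rv = (\<lambda>m. if m = (False, True, False) then 1 else 0)"
definition rw :: R where "rw = (\<lambda>m. if m = (False, False, True) then 1 else 0)"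

definition eta :: "nat \<Rightarrow> R" where
  "eta i = (if i = 1 then rmul (rmul (rsub rone ru) (rsub rone rv)) (rsub rone rw)
       else if i = 2 then rmul (rmul ru (rsub rone rv)) (rsub rone rw)
       else if i = 3 then rmul (rmul (rsub rone ru) rv) (rsub rone rw)
       else if i = 4 then rmul (rmul (rsub rone ru) (rsub rone rv)) rw
       else if i = 5 then rmul (rmul ru rv) (rsub rone rw)
       else if i = 6 then rmul (rmul ru (rsub rone rv)) rw
       else if i = 7 then rmul (rmul (rsub rone ru) rv) rw
       else rmul (rmul ru rv) rw)"

definition vecs :: "nat \<Rightarrow> (nat \<Rightarrow> 'a::zero) set" where
  "vecs n = {x. \<forall>j\<ge>n. x j = 0}"

definition linear_code_R :: "nat \<Rightarrow> (nat \<Rightarrow> R) set \<Rightarrow> bool" where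
  "linear_code_R n C \<longleftrightarrow> C \<subseteq> {x. \<forall>j\<ge>n. x j = rzero} \<and> (\<lambda>j. rzero) \<in> C
     \<and> (\<forall>x\<in>C. \<forall>y\<in>C. (\<lambda>j. radd (x j) (y j)) \<in> C)
     \<and> (\<forall>r. \<forall>x\<in>C. (\<lambda>j. rmul r (x j)) \<in> C)"

definition rsum8 :: "(nat \<Rightarrow> R) \<Rightarrow> R" where
  "rsum8 f = foldr radd (map f [1..<9]) rzero"

definition comps :: "(nat \<Rightarrow> R) \<Rightarrow> nat \<Rightarrow> (nat \<Rightarrow> Z4)" where
  "comps x = (THE ys. (\<forall>i. i \<notin> {1..8} \<longrightarrow> ys i = (\<lambda>j. 0))
       \<and> (\<forall>j. x j = rsum8 (\<lambda>i. rmul (rconst (ys i j)) (eta i))))"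

definition component_code :: "(nat \<Rightarrow> R) set \<Rightarrow> nat \<Rightarrow> (nat \<Rightarrow> Z4) set" where
  "component_code C i = {comps x i | x. x \<in> C}"

definition hdist :: "nat \<Rightarrow> (nat \<Rightarrow> 'a) \<Rightarrow> (nat \<Rightarrow> 'a) \<Rightarrow> nat" where
  "hdist n x y = card {j. j < n \<and> x j \<noteq> y j}"

definition dmin :: "nat \<Rightarrow> (nat \<Rightarrow> 'a) set \<Rightarrow> nat" where
  "dmin n D = Min {hdist n x y | x y. x \<in> D \<and> y \<in> D \<and> x \<noteq> y}"

definition is_MDS :: "nat \<Rightarrow> (nat \<Rightarrow> 'a::finite) set \<Rightarrow> bool" where
  "is_MDS n D \<longleftrightarrow> real (dmin n D) = real n - log (real CARD('a)) (real (card D)) + 1"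

end

theory Submission
  imports Defs "HOL-Library.FuncSet"
begin

text \<open>Evaluating at the eight points of {0,1}^3 is a ring isomorphism from R onto Z4^8 sending
  eta_i to the i-th unit vector, and the i-th coordinate of this isomorphism is exactly the map
  x \<mapsto> x_i. Hence C is the direct sum of the eta_i C_i, so |C| = \<Prod> |C_i|, and d(C) is the least
  d(C_i) over the nonzero C_i. Writing k_i = log_4 |C_i|, C is MDS iff d(C) = n + 1 - (\<Sum> k_i)/8,
  whereas the Singleton bound gives k_i \<le> n + 1 - d(C_i) \<le> n + 1 - d(C) for every i.
  The average of these eight inequalities is an equality exactly when each of them is.\<close>

section \<open>Hamming distance and the Singleton bound\<close>

lemma one_less_card_iff: "finite A \<Longrightarrow> 1 < card A \<longleftrightarrow> (\<exists>x\<in>A. \<exists>y\<in>A. x \<noteq> y)"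
  using card_le_Suc0_iff_eq[of A] by (auto simp: not_le[symmetric])

lemma log_prod: "finite A \<Longrightarrow> \<forall>i\<in>A. 0 < f i \<Longrightarrow> log b (\<Prod>i\<in>A. f i) = (\<Sum>i\<in>A. log b (f i))"
  by (induction A rule: finite_induct) (auto simp: log_mult prod_pos)

lemma finite_eventually_const_funs: "finite {x :: nat \<Rightarrow> 'a::finite. \<forall>j\<ge>n. x j = z}"
proof -
  have "{x :: nat \<Rightarrow> 'a. \<forall>j\<ge>n. x j = z}
      = {f. \<forall>j. (j \<in> {..<n} \<longrightarrow> f j \<in> UNIV) \<and> (j \<notin> {..<n} \<longrightarrow> f j = z)}"
    by auto
  then show ?thesis using finite_set_of_finite_funs[of "{..<n}" "UNIV :: 'a set" z] by simp
qed

lemma hdist_le_length: "hdist n x y \<le> n"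
proof -
  have "card {j. j < n \<and> x j \<noteq> y j} \<le> card {..<n}"
    by (rule card_mono) auto
  then show ?thesis by (simp add: hdist_def)
qed

lemma hdist_ge_1:
  assumes "x \<in> vecs n" "y \<in> vecs n" "x \<noteq> y"
  shows "1 \<le> hdist n x y"
proof -
  obtain j where j: "x j \<noteq> y j" using assms(3) by auto
  have "j < n"
  proof (rule ccontr)
    assume "\<not> j < n"
    then have "x j = 0" "y j = 0" using assms(1,2) by (simp_all add: vecs_def)
    with j show False by simp
  qed
  with j have "{j. j < n \<and> x j \<noteq> y j} \<noteq> {}" by auto
  then show ?thesis unfolding hdist_def by (simp add: Suc_leI card_gt_0_iff)
qed

lemma finite_hdists: "finite {hdist n x y | x y. x \<in> D \<and> y \<in> D \<and> x \<noteq> y}"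
  by (rule finite_subset[of _ "{..n}"]) (auto simp: hdist_le_length)

lemma dmin_le_hdist: "x \<in> D \<Longrightarrow> y \<in> D \<Longrightarrow> x \<noteq> y \<Longrightarrow> dmin n D \<le> hdist n x y"
  unfolding dmin_def by (rule Min_le[OF finite_hdists]) blast

lemma dmin_greatest:
  assumes "\<And>x y. x \<in> D \<Longrightarrow> y \<in> D \<Longrightarrow> x \<noteq> y \<Longrightarrow> b \<le> hdist n x y"
    and "x \<in> D" "y \<in> D" "x \<noteq> y"
  shows "b \<le> dmin n D"
  unfolding dmin_def using assms by (subst Min_ge_iff[OF finite_hdists]) auto

lemma dmin_attained:
  assumes "x \<in> D" "y \<in> D" "x \<noteq> y"
  obtains x' y' where "x' \<in> D" "y' \<in> D" "x' \<noteq> y'" "dmin n D = hdist n x' y'"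
proof -
  have "dmin n D \<in> {hdist n x y | x y. x \<in> D \<and> y \<in> D \<and> x \<noteq> y}"
    unfolding dmin_def by (rule Min_in[OF finite_hdists]) (use assms in blast)
  then show ?thesis using that by blast
qed

lemma dmin_ge_1:
  assumes "D \<subseteq> vecs n" "x \<in> D" "y \<in> D" "x \<noteq> y"
  shows "1 \<le> dmin n D"
  using assms(2-4) by (rule dmin_greatest[rotated]) (use assms(1) in \<open>blast intro: hdist_ge_1\<close>)

lemma dmin_le_length: "x \<in> D \<Longrightarrow> y \<in> D \<Longrightarrow> x \<noteq> y \<Longrightarrow> dmin n D \<le> n"
  using dmin_le_hdist[of x D y n] hdist_le_length[of n x y] by linarith

text \<open>Singleton bound: codewords are determined by their first n - d + 1 coordinates.\<close>
lemma singleton_bound: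
  fixes D :: "(nat \<Rightarrow> 'a::{finite,zero}) set"
  assumes "D \<subseteq> vecs n" "x \<in> D" "y \<in> D" "x \<noteq> y"
  shows "card D \<le> CARD('a) ^ (n + 1 - dmin n D)"
proof -
  let ?d = "dmin n D"
  define m where "m = n + 1 - ?d"
  have inj: "inj_on (\<lambda>x. restrict x {..<m}) D"
  proof (rule inj_onI, rule ccontr)
    fix x y assume x: "x \<in> D" and y: "y \<in> D" and "x \<noteq> y"
      and "restrict x {..<m} = restrict y {..<m}"
    then have "{j. j < n \<and> x j \<noteq> y j} \<subseteq> {m..<n}"
      by (auto simp: fun_eq_iff not_less[symmetric] split: if_splits)
    then have "hdist n x y \<le> card {m..<n}"
      unfolding hdist_def by (rule card_mono[rotated]) simp
    also have "\<dots> < ?d"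
      using dmin_ge_1[OF assms] dmin_le_length[OF assms(2-4)] by (simp add: m_def)
    finally show False
      using dmin_le_hdist[OF x y \<open>x \<noteq> y\<close>, of n] by simp
  qed
  have "card D \<le> card (PiE {..<m} (\<lambda>_. UNIV :: 'a set))"
    by (rule card_inj_on_le[OF inj]) (auto simp: finite_PiE split: if_splits)
  also have "\<dots> = CARD('a) ^ m" by (simp add: card_PiE)
  finally show ?thesis by (simp add: m_def)
qed

lemma is_MDS_if_card_eq:
  fixes D :: "(nat \<Rightarrow> 'a::finite) set"
  assumes "card D = CARD('a) ^ (n + 1 - dmin n D)" "dmin n D \<le> n + 1" "1 < CARD('a)"
  shows "is_MDS n D"
  using assms by (simp add: is_MDS_def log_nat_power of_nat_diff)

section \<open>R as a product of eight copies of Z4\<close>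

definition mono_le :: "mono \<Rightarrow> mono \<Rightarrow> bool" where
  "mono_le m p \<longleftrightarrow> (fst m \<longrightarrow> fst p) \<and> (fst (snd m) \<longrightarrow> fst (snd p)) \<and> (snd (snd m) \<longrightarrow> snd (snd p))"

text \<open>Evaluation of an element of R at the point p of {0,1}^3: the monomial
  u^a v^b w^c takes the value 1 at p iff (a,b,c) \<le> p componentwise.\<close>
definition eval_R :: "R \<Rightarrow> mono \<Rightarrow> Z4" where
  "eval_R r p = (\<Sum>m\<in>{m. mono_le m p}. r m)"

lemma mono_le_mono_mult: "mono_le (mono_mult a b) p \<longleftrightarrow> mono_le a p \<and> mono_le b p"
  by (cases a; cases b; auto simp: mono_le_def mono_mult_def)

lemma eval_R_rmul: "eval_R (rmul f g) p = eval_R f p * eval_R g p"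
proof -
  let ?P = "{m. mono_le m p}"
  have "eval_R (rmul f g) p
      = (\<Sum>m\<in>?P. \<Sum>q\<in>{q. q \<in> ?P \<times> ?P \<and> mono_mult (fst q) (snd q) = m}. f (fst q) * g (snd q))"
    unfolding eval_R_def rmul_def
    by (rule sum.cong) (auto intro!: sum.cong simp: mono_le_mono_mult[symmetric] mem_Times_iff)
  also have "\<dots> = (\<Sum>q\<in>?P \<times> ?P. f (fst q) * g (snd q))"
    by (rule sum.group) (auto simp: mono_le_mono_mult)
  also have "\<dots> = eval_R f p * eval_R g p"
    by (simp add: eval_R_def sum_product sum.cartesian_product split_def)
  finally show ?thesis .
qed

lemma eval_R_radd: "eval_R (radd f g) p = eval_R f p + eval_R g p"
  by (simp add: eval_R_def radd_def sum.distrib)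

lemma eval_R_rsub: "eval_R (rsub f g) p = eval_R f p - eval_R g p"
  by (simp add: eval_R_def rsub_def sum_subtractf)

lemma eval_R_rzero: "eval_R rzero p = 0"
  by (simp add: eval_R_def rzero_def)

lemma eval_R_rconst: "eval_R (rconst c) p = c"
  by (simp add: eval_R_def rconst_def sum.delta' mono_le_def)

lemma eval_R_rsum8: "eval_R (rsum8 f) p = (\<Sum>i\<in>{1..8}. eval_R (f i) p)"
proof -
  have "eval_R (foldr radd (map f xs) rzero) p = (\<Sum>i\<leftarrow>xs. eval_R (f i) p)" for xs
    by (induction xs) (auto simp: eval_R_radd eval_R_rzero)
  moreover have "{1..8::nat} = set [1..<9]" by auto
  ultimately show ?thesis
    unfolding rsum8_def by (simp add: sum_list_distinct_conv_sum_set)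
qed

text \<open>The point of {0,1}^3 at which eta i takes the value 1.\<close>
definition eta_point :: "nat \<Rightarrow> mono" where
  "eta_point i = (if i = 1 then (False,False,False) else if i = 2 then (True,False,False)
     else if i = 3 then (False,True,False) else if i = 4 then (False,False,True)
     else if i = 5 then (True,True,False) else if i = 6 then (True,False,True)
     else if i = 7 then (False,True,True) else (True,True,True))"

lemma atLeastAtMost_1_8: "{1..8::nat} = {1,2,3,4,5,6,7,8}"
  by auto

lemma bij_eta_point: "bij_betw eta_point {1..8} UNIV"
proof (rule bij_betw_imageI)
  show "inj_on eta_point {1..8}"
    unfolding atLeastAtMost_1_8 by (simp add: eta_point_def inj_on_def)
  show "eta_point ` {1..8} = UNIV"
    unfolding atLeastAtMost_1_8 by (auto simp: eta_point_def)
qed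

lemma eval_R_eta:
  assumes "i \<in> {1..8}"
  shows "eval_R (eta i) p = (if p = eta_point i then 1 else 0)"
proof -
  have "eval_R rone p = 1" "eval_R ru p = (if fst p then 1 else 0)"
    "eval_R rv p = (if fst (snd p) then 1 else 0)" "eval_R rw p = (if snd (snd p) then 1 else 0)"
    by (simp_all add: eval_R_def rone_def rconst_def ru_def rv_def rw_def sum.delta' mono_le_def)
  with assms show ?thesis
    by (cases p) (auto simp: eta_def eval_R_rmul eval_R_rsub eta_point_def)
qed

lemma eval_R_eta_point:
  "i \<in> {1..8} \<Longrightarrow> k \<in> {1..8} \<Longrightarrow> eval_R (eta i) (eta_point k) = (if i = k then 1 else 0)"
  using bij_betw_imp_inj_on[OF bij_eta_point] by (auto simp: eval_R_eta inj_on_eq_iff)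

lemma eval_R_rsum8_eta:
  assumes "k \<in> {1..8}"
  shows "eval_R (rsum8 (\<lambda>i. rmul (f i) (eta i))) (eta_point k) = eval_R (f k) (eta_point k)"
proof -
  have "eval_R (rsum8 (\<lambda>i. rmul (f i) (eta i))) (eta_point k)
      = (\<Sum>i\<in>{1..8}. if i = k then eval_R (f i) (eta_point k) else 0)"
    unfolding eval_R_rsum8 by (rule sum.cong) (use assms in \<open>auto simp: eval_R_rmul eval_R_eta_point\<close>)
  also have "\<dots> = eval_R (f k) (eta_point k)"
    using assms by (simp add: sum.delta')
  finally show ?thesis .
qed

lemma eq_if_eq_on_eta_points:
  assumes "\<forall>k\<in>{1..8}. g (eta_point k) = h (eta_point k)"
  shows "g = h"
proof
  fix p
  obtain k where "k \<in> {1..8}" "p = eta_point k"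
    using bij_betw_imp_surj_on[OF bij_eta_point] by blast
  then show "g p = h p" using assms by blast
qed

text \<open>The eta i let every function on the eight points be attained, so evaluation is onto
  and hence, R being finite, injective.\<close>
lemma surj_eval_R: "surj eval_R"
proof (rule surjI)
  fix g :: "mono \<Rightarrow> Z4"
  show "eval_R (rsum8 (\<lambda>i. rmul (rconst (g (eta_point i))) (eta i))) = g"
    by (rule eq_if_eq_on_eta_points) (simp add: eval_R_rsum8_eta eval_R_rconst)
qed

lemma eval_R_eqI:
  assumes "\<forall>k\<in>{1..8}. eval_R r (eta_point k) = eval_R s (eta_point k)"
  shows "r = s"
proof -
  have "eval_R r = eval_R s"
    by (rule eq_if_eq_on_eta_points) (rule assms)
  then show ?thesis
    using finite_UNIV_surj_inj[OF _ surj_eval_R] by (simp add: inj_eq)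
qed

lemma rmul_commute: "rmul f g = rmul g f"
  by (rule eval_R_eqI) (simp add: eval_R_rmul mult.commute)

lemma comps_eq:
  "comps x = (\<lambda>i. if i \<in> {1..8} then (\<lambda>j. eval_R (x j) (eta_point i)) else (\<lambda>j. 0))"
  unfolding comps_def
proof (rule the_equality)
  fix ys
  assume ys: "(\<forall>i. i \<notin> {1..8} \<longrightarrow> ys i = (\<lambda>j. 0))
    \<and> (\<forall>j. x j = rsum8 (\<lambda>i. rmul (rconst (ys i j)) (eta i)))"
  have "eval_R (x j) (eta_point i) = ys i j" if "i \<in> {1..8}" for i j
    using ys eval_R_rsum8_eta[OF that, of "\<lambda>i. rconst (ys i j)"] by (simp add: eval_R_rconst)
  with ys show "ys = (\<lambda>i. if i \<in> {1..8} then (\<lambda>j. eval_R (x j) (eta_point i)) else (\<lambda>j. 0))"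
    by (auto simp: fun_eq_iff)
qed (auto intro!: eval_R_eqI simp: eval_R_rsum8_eta eval_R_rconst)

lemma comps_in: "i \<in> {1..8} \<Longrightarrow> comps x i = (\<lambda>j. eval_R (x j) (eta_point i))"
  by (simp add: comps_eq)

lemma comps_out: "i \<notin> {1..8} \<Longrightarrow> comps x i = (\<lambda>j. 0)"
  by (simp only: comps_eq if_False)

lemma comps_neq_at: "x j \<noteq> y j \<Longrightarrow> \<exists>k\<in>{1..8}. comps x k j \<noteq> comps y k j"
  using eval_R_eqI[of "x j" "y j"] by (auto simp: comps_in)

lemma comps_neq: "x \<noteq> y \<Longrightarrow> \<exists>k\<in>{1..8}. comps x k \<noteq> comps y k"
  using comps_neq_at by (metis ext)

lemma rmul_eta_eq_iff:
  assumes "i \<in> {1..8}"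
  shows "rmul (eta i) a = rmul (eta i) b \<longleftrightarrow> eval_R a (eta_point i) = eval_R b (eta_point i)"
proof
  assume "rmul (eta i) a = rmul (eta i) b"
  then show "eval_R a (eta_point i) = eval_R b (eta_point i)"
    using assms by (metis eval_R_rmul eval_R_eta_point mult_1)
next
  assume "eval_R a (eta_point i) = eval_R b (eta_point i)"
  then show "rmul (eta i) a = rmul (eta i) b"
    using assms by (intro eval_R_eqI) (simp add: eval_R_rmul eval_R_eta_point)
qed

lemma hdist_comps_le: "hdist n (comps x k) (comps y k) \<le> hdist n x y"
proof -
  have "{j. j < n \<and> comps x k j \<noteq> comps y k j} \<subseteq> {j. j < n \<and> x j \<noteq> y j}"
    by (cases "k \<in> {1..8}") (auto simp: comps_in comps_out)
  then show ?thesis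
    unfolding hdist_def by (rule card_mono[rotated]) simp
qed

lemma hdist_rmul_eta:
  "i \<in> {1..8} \<Longrightarrow>
    hdist n (\<lambda>j. rmul (eta i) (x j)) (\<lambda>j. rmul (eta i) (y j)) = hdist n (comps x i) (comps y i)"
  by (simp add: hdist_def comps_in rmul_eta_eq_iff)

section \<open>Linear codes over R and their component codes\<close>

locale R_linear_code =
  fixes n :: nat and C :: "(nat \<Rightarrow> R) set"
  assumes linear_code: "linear_code_R n C"
begin

lemma code_sub: "C \<subseteq> {x. \<forall>j\<ge>n. x j = rzero}"
  using linear_code by (simp add: linear_code_R_def)

lemma zero_in_code: "(\<lambda>j. rzero) \<in> C"
  using linear_code by (simp add: linear_code_R_def)

lemma radd_in_code: "x \<in> C \<Longrightarrow> y \<in> C \<Longrightarrow> (\<lambda>j. radd (x j) (y j)) \<in> C"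
  using linear_code by (simp add: linear_code_R_def)

lemma rmul_in_code: "x \<in> C \<Longrightarrow> (\<lambda>j. rmul r (x j)) \<in> C"
  using linear_code by (simp add: linear_code_R_def)

lemma rsum8_in_code:
  assumes "\<And>i. i \<in> {1..8} \<Longrightarrow> (\<lambda>j. f i j) \<in> C"
  shows "(\<lambda>j. rsum8 (\<lambda>i. f i j)) \<in> C"
proof -
  have "set xs \<subseteq> {1..8} \<Longrightarrow> (\<lambda>j. foldr radd (map (\<lambda>i. f i j) xs) rzero) \<in> C" for xs
    by (induction xs) (auto simp: zero_in_code assms intro: radd_in_code[of "\<lambda>j. f _ j", simplified])
  moreover have "set [1..<9] \<subseteq> {1..8::nat}" by auto
  ultimately show ?thesis
    unfolding rsum8_def by blast
qed

lemma finite_code: "finite C"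
  using finite_subset[OF code_sub finite_eventually_const_funs] .

lemma component_code_sub: "component_code C i \<subseteq> vecs n"
proof
  fix y assume "y \<in> component_code C i"
  then obtain x where "x \<in> C" "y = comps x i" by (auto simp: component_code_def)
  then show "y \<in> vecs n"
    using code_sub by (cases "i \<in> {1..8}") (auto simp: vecs_def comps_in comps_out eval_R_rzero)
qed

lemma finite_component_code: "finite (component_code C i)"
  by (rule finite_subset[OF component_code_sub]) (simp add: vecs_def finite_eventually_const_funs)

lemma card_component_code_pos: "0 < card (component_code C i)"
proof -
  have "comps (\<lambda>j. rzero) i \<in> component_code C i"
    using zero_in_code by (auto simp: component_code_def)
  then show ?thesis using finite_component_code card_gt_0_iff by blast
qed

lemma card_code: "card C = (\<Prod>i\<in>{1..8}. card (component_code C i))"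
proof -
  let ?F = "\<lambda>x. restrict (comps x) {1..8}"
  have "bij_betw ?F C (PiE {1..8} (component_code C))"
  proof (rule bij_betwI')
    fix x y assume "x \<in> C" "y \<in> C"
    show "?F x = ?F y \<longleftrightarrow> x = y"
    proof
      assume "?F x = ?F y"
      then have "\<forall>k\<in>{1..8}. comps x k = comps y k"
        by (metis restrict_apply')
      then show "x = y" using comps_neq by blast
    qed simp
  next
    fix x assume "x \<in> C"
    then show "?F x \<in> PiE {1..8} (component_code C)"
      by (auto simp: component_code_def)
  next
    fix f assume f: "f \<in> PiE {1..8} (component_code C)"
    then have "\<forall>i\<in>{1..8}. \<exists>x\<in>C. comps x i = f i"
      by (force simp: component_code_def PiE_iff)
    then obtain xs where xs: "\<And>i. i \<in> {1..8} \<Longrightarrow> xs i \<in> C \<and> comps (xs i) i = f i"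
      by metis
    define z where "z = (\<lambda>j. rsum8 (\<lambda>i. rmul (xs i j) (eta i)))"
    have "z \<in> C"
      unfolding z_def using xs by (intro rsum8_in_code) (simp add: rmul_commute rmul_in_code)
    moreover have "comps z k = f k" if k: "k \<in> {1..8}" for k
    proof -
      have "comps z k = comps (xs k) k"
        using k by (simp add: z_def comps_in eval_R_rsum8_eta)
      then show ?thesis using xs[OF k] by simp
    qed
    moreover have "f k = undefined" if "k \<notin> {1..8}" for k
      using f that by (rule PiE_arb)
    ultimately have "f = ?F z"
      by (auto simp: fun_eq_iff)
    with \<open>z \<in> C\<close> show "\<exists>z\<in>C. f = ?F z" by blast
  qed
  then have "card C = card (PiE {1..8} (component_code C))"
    by (rule bij_betw_same_card)
  then show ?thesis by (simp add: card_PiE)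
qed

lemma dmin_code_le_dmin_component:
  assumes i: "i \<in> {1..8}" and "y \<in> component_code C i" "y' \<in> component_code C i" "y \<noteq> y'"
  shows "dmin n C \<le> dmin n (component_code C i)"
proof -
  obtain a b where ab: "a \<in> component_code C i" "b \<in> component_code C i" "a \<noteq> b"
    "dmin n (component_code C i) = hdist n a b"
    using dmin_attained[OF assms(2-4)] by blast
  then obtain x x' where x: "x \<in> C" "x' \<in> C" "a = comps x i" "b = comps x' i"
    by (auto simp: component_code_def)
  let ?z = "\<lambda>j. rmul (eta i) (x j)" and ?z' = "\<lambda>j. rmul (eta i) (x' j)"
  have "?z \<noteq> ?z'"
  proof
    assume "?z = ?z'"
    then have "eval_R (x j) (eta_point i) = eval_R (x' j) (eta_point i)" for j
      using rmul_eta_eq_iff[OF i] by (metis (mono_tags))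
    then show False
      using ab(3) x(3,4) i by (simp add: comps_in)
  qed
  then have "dmin n C \<le> hdist n ?z ?z'"
    using x by (intro dmin_le_hdist rmul_in_code)
  also have "\<dots> = dmin n (component_code C i)"
    using hdist_rmul_eta[OF i] ab(4) x(3,4) by simp
  finally show ?thesis .
qed

lemma dmin_code_ge:
  assumes "\<forall>i\<in>{1..8}. b \<le> dmin n (component_code C i)"
    and "x \<in> C" "y \<in> C" "x \<noteq> y"
  shows "b \<le> dmin n C"
proof (rule dmin_greatest[OF _ assms(2-4)])
  fix x y assume xy: "x \<in> C" "y \<in> C" "x \<noteq> y"
  then obtain k where k: "k \<in> {1..8}" "comps x k \<noteq> comps y k"
    using comps_neq by blast
  have "b \<le> dmin n (component_code C k)"
    using assms(1) k by blast
  also have "\<dots> \<le> hdist n (comps x k) (comps y k)"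
    using xy k by (intro dmin_le_hdist) (auto simp: component_code_def)
  also have "\<dots> \<le> hdist n x y"
    by (rule hdist_comps_le)
  finally show "b \<le> hdist n x y" .
qed

lemma log_card_code:
  "log (real CARD(R)) (real (card C)) = (\<Sum>i\<in>{1..8}. log 4 (real (card (component_code C i)))) / 8"
proof -
  have "log (real CARD(R)) (real (card C)) = log (4 ^ 8) (\<Prod>i\<in>{1..8}. real (card (component_code C i)))"
    by (simp add: card_code card_fun)
  also have "\<dots> = log 4 (\<Prod>i\<in>{1..8}. real (card (component_code C i))) / 8"
    by (subst log_base_pow) simp_all
  also have "\<dots> = (\<Sum>i\<in>{1..8}. log 4 (real (card (component_code C i)))) / 8"
    using card_component_code_pos by (simp add: log_prod)
  finally show ?thesis .
qed

text \<open>The Singleton bound for C_i, combined with d(C) \<le> d(C_i).\<close>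
lemma dmin_code_add_log_card_component_le:
  assumes "x \<in> C" "y \<in> C" "x \<noteq> y" "i \<in> {1..8}"
  shows "real (dmin n C) + log 4 (real (card (component_code C i))) \<le> real n + 1"
proof (cases "1 < card (component_code C i)")
  case True
  then obtain a b where ab: "a \<in> component_code C i" "b \<in> component_code C i" "a \<noteq> b"
    using one_less_card_iff[OF finite_component_code] by blast
  have "card (component_code C i) \<le> 4 ^ (n + 1 - dmin n (component_code C i))"
    using singleton_bound[OF component_code_sub ab] by simp
  then have "log 4 (real (card (component_code C i))) \<le> real (n + 1 - dmin n (component_code C i))"
    using card_component_code_pos by (intro log_of_power_le) auto
  moreover have "dmin n C \<le> dmin n (component_code C i)"
    using dmin_code_le_dmin_component[OF assms(4) ab] .
  moreover have "dmin n (component_code C i) \<le> n"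
    using dmin_le_length[OF ab] .
  ultimately show ?thesis by (simp add: of_nat_diff)
next
  case False
  then have "card (component_code C i) = 1"
    using card_component_code_pos[of i] by linarith
  moreover have "dmin n C \<le> n"
    using dmin_le_length[OF assms(1-3)] .
  ultimately show ?thesis by simp
qed

text \<open>For an MDS code the averaged Singleton bounds are tight, so each one is.\<close>
lemma card_component_if_MDS:
  assumes "x \<in> C" "y \<in> C" "x \<noteq> y" "is_MDS n C" "i \<in> {1..8}"
  shows "card (component_code C i) = 4 ^ (n + 1 - dmin n C)"
proof -
  let ?K = "\<lambda>i. log 4 (real (card (component_code C i)))"
  let ?e = "real n + 1 - real (dmin n C)"
  have "(\<Sum>i\<in>{1..8}. ?K i) = 8 * ?e"
    using assms(4) unfolding is_MDS_def log_card_code by simp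
  then have "(\<Sum>i\<in>{1..8}. ?e - ?K i) = 0"
    by (simp add: sum_subtractf)
  moreover have "0 \<le> ?e - ?K i" if "i \<in> {1..8}" for i
    using dmin_code_add_log_card_component_le[OF assms(1-3) that] by simp
  ultimately have "\<forall>j\<in>{1..8}. ?e - ?K j = 0"
    using sum_nonneg_eq_0_iff[of "{1..8}" "\<lambda>j. ?e - ?K j"] by blast
  then have "?e - ?K i = 0"
    using assms(5) by blast
  moreover have "real (n + 1 - dmin n C) = ?e"
    using dmin_le_length[OF assms(1-3), of n] by (simp add: of_nat_diff)
  ultimately have K: "?K i = real (n + 1 - dmin n C)"
    by linarith
  have "real (card (component_code C i)) = 4 powr ?K i"
    using card_component_code_pos[of i] by simp
  also have "\<dots> = real (4 ^ (n + 1 - dmin n C))"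
    unfolding K by (simp add: powr_realpow)
  finally show ?thesis
    by (simp only: of_nat_eq_iff)
qed

lemma dmin_component_if_MDS:
  assumes "x \<in> C" "y \<in> C" "x \<noteq> y" "is_MDS n C" "i \<in> {1..8}"
  shows "dmin n (component_code C i) = dmin n C"
proof -
  let ?D = "component_code C i"
  have card: "card ?D = 4 ^ (n + 1 - dmin n C)"
    using card_component_if_MDS[OF assms] .
  have "dmin n C \<le> n"
    using dmin_le_length[OF assms(1-3)] .
  then have "1 < card ?D"
    unfolding card by (intro one_less_power) auto
  then obtain a b where ab: "a \<in> ?D" "b \<in> ?D" "a \<noteq> b"
    using one_less_card_iff[OF finite_component_code] by blast
  have "(4::nat) ^ (n + 1 - dmin n C) \<le> 4 ^ (n + 1 - dmin n ?D)"
    using singleton_bound[OF component_code_sub ab] card by simp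
  then have "n + 1 - dmin n C \<le> n + 1 - dmin n ?D"
    by simp
  moreover have "dmin n C \<le> dmin n ?D"
    using dmin_code_le_dmin_component[OF assms(5) ab] .
  moreover have "dmin n ?D \<le> n"
    using dmin_le_length[OF ab] .
  ultimately show ?thesis by linarith
qed

lemma MDS_if_components_MDS:
  assumes "x \<in> C" "y \<in> C" "x \<noteq> y"
    and MDS: "\<forall>i\<in>{1..8}. is_MDS n (component_code C i)"
    and same: "\<forall>i\<in>{1..8}. \<forall>k\<in>{1..8}. card (component_code C i) = card (component_code C k)
                 \<and> dmin n (component_code C i) = dmin n (component_code C k)"
  shows "is_MDS n C"
proof -
  let ?D = "component_code C 1"
  define q where "q = card ?D"
  have one: "1 \<in> {1..8::nat}" by simp
  have card_eq: "card (component_code C i) = q" if "i \<in> {1..8}" for i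
    using same that one unfolding q_def by blast
  have "card C = q ^ 8"
    unfolding card_code using card_eq by simp
  moreover have "1 < card C"
    using one_less_card_iff[OF finite_code] assms(1-3) by blast
  ultimately have "1 < card ?D"
    unfolding q_def using power_le_one[of "card ?D" 8] by (cases "card ?D \<le> 1") auto
  then obtain a b where ab: "a \<in> ?D" "b \<in> ?D" "a \<noteq> b"
    using one_less_card_iff[OF finite_component_code] by blast
  have "dmin n C \<le> dmin n ?D"
    using dmin_code_le_dmin_component[OF one ab] .
  moreover have "dmin n ?D \<le> dmin n C"
    using same one by (intro dmin_code_ge[OF _ assms(1-3)]) (metis order_refl)
  ultimately have "dmin n C = dmin n ?D"
    by (rule antisym)
  moreover have "log (real CARD(R)) (real (card C)) = log 4 (real q)"
    unfolding log_card_code using card_eq by simp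
  ultimately show ?thesis
    using MDS one unfolding q_def by (simp add: is_MDS_def)
qed

end

theorem mainTheorem3:
  fixes n :: nat and C :: "(nat \<Rightarrow> R) set"
  assumes "linear_code_R n C"
    and "C \<noteq> {(\<lambda>j. rzero)}"
  shows "is_MDS n C \<longleftrightarrow>
           ((\<forall>i\<in>{1..8}. is_MDS n (component_code C i))
            \<and> (\<forall>i\<in>{1..8}. \<forall>k\<in>{1..8}.
                  card (component_code C i) = card (component_code C k)
                \<and> dmin n (component_code C i) = dmin n (component_code C k)))"
proof -
  interpret R_linear_code n C
    by unfold_locales (rule assms(1))
  obtain x where x: "x \<in> C" "x \<noteq> (\<lambda>j. rzero)"
    using assms(2) zero_in_code by blast
  note distinct = zero_in_code x(1) x(2)[symmetric]
  show ?thesis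
  proof
    assume "is_MDS n C"
    note card = card_component_if_MDS[OF distinct this] and dmin = dmin_component_if_MDS[OF distinct this]
    have "dmin n C \<le> n"
      using dmin_le_length[OF distinct] .
    then have "is_MDS n (component_code C i)" if "i \<in> {1..8}" for i
      using card[OF that] dmin[OF that] by (intro is_MDS_if_card_eq) simp_all
    then show "(\<forall>i\<in>{1..8}. is_MDS n (component_code C i))
      \<and> (\<forall>i\<in>{1..8}. \<forall>k\<in>{1..8}. card (component_code C i) = card (component_code C k)
           \<and> dmin n (component_code C i) = dmin n (component_code C k))"
      using card dmin by simp
  qed (use MDS_if_components_MDS[OF distinct] in blast)
qed

end
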